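(* Let $0<q<1$. Define the $q$-Hermite polynomials $H_{n,q}(x)$ by \[ H_q(t)\,e_q(tx)=\sum_{n=0}^\infty H_{n,q}(x)\frac{t^n}{[n]_q!},\qquad H_q(t)=\sum_{n=0}^\infty(-1)^nq^{n(n-1)}\frac{t^{2n}}{[2n]_q!!}. \] Then for every integer $n\ge2$, \[ H_{n,q}(qx)=xq^nH_{n-1,q}(x)-[n-1]_q\,q^{n-2}H_{n-2,q}(x). \]
   Context: $[n]_q=\frac{1-q^n}{1-q}$, $[0]_q!=1$, $[n]_q!=[n]_q\cdots[1]_q$, $[0]_q!!=1$, $[2n]_q!!=[2n]_q[2n-2]_q\cdots[2]_q$, and $e_q(t)=\sum_{n\ge0}\frac{t^n}{[n]_q!}$. *)

theory Defs
  imports Complex_Main "HOL-Computational_Algebra.Formal_Power_Series"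
begin

definition qint :: "real \<Rightarrow> nat \<Rightarrow> real" where
  "qint q n = (1 - q ^ n) / (1 - q)"

definition qfact :: "real \<Rightarrow> nat \<Rightarrow> real" where
  "qfact q n = (\<Prod>k=1..n. qint q k)"

text \<open>qdfact q n = [2n]_q!! = [2n]_q [2n-2]_q ... [2]_q, with [0]_q!! = 1\<close>
definition qdfact :: "real \<Rightarrow> nat \<Rightarrow> real" where
  "qdfact q n = (\<Prod>k=1..n. qint q (2 * k))"

text \<open>H_q(t) = sum_n (-1)^n q^(n(n-1)) t^(2n) / [2n]_q!!, as a formal power series in t\<close>
definition Hq_fps :: "real \<Rightarrow> real fps" where
  "Hq_fps q = Abs_fps (\<lambda>m. if even m
      then (-1) ^ (m div 2) * q ^ ((m div 2) * (m div 2 - 1)) / qdfact q (m div 2)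
      else 0)"

text \<open>e_q(tx) = sum_n x^n t^n / [n]_q!, as a formal power series in t\<close>
definition eq_fps :: "real \<Rightarrow> real \<Rightarrow> real fps" where
  "eq_fps q x = Abs_fps (\<lambda>n. x ^ n / qfact q n)"

definition qHermite :: "real \<Rightarrow> nat \<Rightarrow> real \<Rightarrow> real" where
  "qHermite q n x = qfact q n * fps_nth (Hq_fps q * eq_fps q x) n"

end

theory Submission
  imports Defs
begin

unbundle fps_syntax

text \<open>Write \<open>\<theta>\<^sub>q\<close> for the operator \<open>f(t) \<mapsto> (f(t) - f(qt))/(1 - q)\<close>, i.e.\ \<open>t D\<^sub>q\<close>,
  which multiplies the \<open>n\<close>-th coefficient by \<open>[n]\<^sub>q\<close>. It satisfies
  \<open>\<theta>\<^sub>q(fg)(t) = (\<theta>\<^sub>q f)(t) g(t) + f(qt) (\<theta>\<^sub>q g)(t)\<close>, and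
  \<open>\<theta>\<^sub>q e\<^sub>q(tx) = xt e\<^sub>q(tx)\<close>, \<open>\<theta>\<^sub>q H\<^sub>q(t) = -t\<^sup>2 H\<^sub>q(qt)\<close>.
  Applied to \<open>H\<^sub>q(t) e\<^sub>q(qtx)\<close>, the product rule gives
  \<open>\<theta>\<^sub>q[H\<^sub>q(t) e\<^sub>q(qtx)] = (qxt - t\<^sup>2) H\<^sub>q(qt) e\<^sub>q(qtx)\<close>, and comparing coefficients of \<open>t\<^sup>n\<close>
  is the recurrence.\<close>

definition fps_qeuler :: "real \<Rightarrow> real fps \<Rightarrow> real fps" where
  "fps_qeuler q f = Abs_fps (\<lambda>n. qint q n * f $ n)"

abbreviation fps_dilate :: "real \<Rightarrow> real fps \<Rightarrow> real fps" where
  "fps_dilate c f \<equiv> f oo (fps_const c * fps_X)"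

lemma qint_0 [simp]: "qint q 0 = 0"
  by (simp add: qint_def)

lemma qint_add: "q \<noteq> 1 \<Longrightarrow> qint q (a + b) = qint q a + q ^ a * qint q b"
  unfolding qint_def by (simp add: field_simps power_add)

lemma qint_nonzero:
  assumes "\<bar>q\<bar> < 1" and "k > 0"
  shows "qint q k \<noteq> 0"
proof -
  have "\<bar>q ^ k\<bar> < 1"
    using assms by (simp add: power_abs power_less_one_iff)
  then show ?thesis
    using assms(1) by (auto simp: qint_def)
qed

lemma qfact_Suc: "qfact q (Suc k) = qint q (Suc k) * qfact q k"
  unfolding qfact_def by (simp add: prod.nat_ivl_Suc' mult.commute)

lemma qdfact_Suc: "qdfact q (Suc k) = qint q (2 * Suc k) * qdfact q k"
  unfolding qdfact_def by (simp add: prod.nat_ivl_Suc' mult.commute)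

lemma fps_qeuler_mult:
  assumes "q \<noteq> 1"
  shows "fps_qeuler q (f * g) = fps_qeuler q f * g + fps_dilate q f * fps_qeuler q g"
proof (rule fps_ext)
  fix n
  have "qint q n * f $ i * g $ (n - i)
      = qint q i * f $ i * g $ (n - i) + q ^ i * f $ i * (qint q (n - i) * g $ (n - i))"
    if "i \<in> {0..n}" for i
    using that qint_add[OF assms, of i "n - i"] by (simp add: algebra_simps)
  then show "fps_qeuler q (f * g) $ n
      = (fps_qeuler q f * g + fps_dilate q f * fps_qeuler q g) $ n"
    by (simp add: fps_qeuler_def fps_mult_nth sum_distrib_left sum.distrib[symmetric] mult.assoc)
qed

lemma fps_qeuler_eq_fps:
  assumes "\<bar>q\<bar> < 1"
  shows "fps_qeuler q (eq_fps q x) = fps_const x * fps_X * eq_fps q x"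
proof (rule fps_ext)
  fix n
  show "fps_qeuler q (eq_fps q x) $ n = (fps_const x * fps_X * eq_fps q x) $ n"
  proof (cases n)
    case (Suc k)
    then show ?thesis
      using qint_nonzero[OF assms, of "Suc k"]
      by (simp add: fps_qeuler_def eq_fps_def qfact_Suc mult.assoc)
  qed (simp add: fps_qeuler_def)
qed

lemma Hq_fps_nth_Suc_Suc:
  assumes "\<bar>q\<bar> < 1"
  shows "qint q (k + 2) * Hq_fps q $ (k + 2) = - (q ^ k * Hq_fps q $ k)"
proof (cases "even k")
  case True
  then obtain l where k: "k = 2 * l"
    by blast
  have "Suc l * l = l * (l - 1) + k"
    using k by (cases l) auto
  then have "q ^ (Suc l * l) = q ^ k * q ^ (l * (l - 1))"
    by (simp add: power_add)
  moreover have "qint q (2 * Suc l) \<noteq> 0"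
    using qint_nonzero[OF assms] by simp
  ultimately show ?thesis
    using k by (simp add: Hq_fps_def qdfact_Suc)
qed (simp add: Hq_fps_def)

lemma fps_qeuler_Hq_fps:
  assumes "\<bar>q\<bar> < 1"
  shows "fps_qeuler q (Hq_fps q) = - (fps_X ^ 2 * fps_dilate q (Hq_fps q))"
proof (rule fps_ext)
  fix n
  show "fps_qeuler q (Hq_fps q) $ n = (- (fps_X ^ 2 * fps_dilate q (Hq_fps q))) $ n"
  proof (cases "n < 2")
    case True
    then show ?thesis
      by (auto simp: less_2_cases_iff fps_qeuler_def Hq_fps_def fps_X_power_mult_nth)
  next
    case False
    then obtain k where "n = k + 2"
      by (metis add.commute le_Suc_ex not_less)
    then show ?thesis
      using Hq_fps_nth_Suc_Suc[OF assms] by (simp add: fps_qeuler_def fps_X_power_mult_nth)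
  qed
qed

lemma eq_fps_scaled_arg: "eq_fps q (c * x) = fps_dilate c (eq_fps q x)"
  by (simp add: eq_fps_def fps_compose_linear power_mult_distrib)

lemma fps_qeuler_qHermite_gf:
  assumes "\<bar>q\<bar> < 1"
  shows "fps_qeuler q (Hq_fps q * eq_fps q (q * x))
    = (fps_const (q * x) * fps_X - fps_X ^ 2) * fps_dilate q (Hq_fps q * eq_fps q x)"
proof -
  have "q \<noteq> 1"
    using assms by auto
  then have "fps_qeuler q (Hq_fps q * eq_fps q (q * x))
      = fps_qeuler q (Hq_fps q) * eq_fps q (q * x)
        + fps_dilate q (Hq_fps q) * fps_qeuler q (eq_fps q (q * x))"
    by (rule fps_qeuler_mult)
  also have "\<dots> = (fps_const (q * x) * fps_X - fps_X ^ 2)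
      * (fps_dilate q (Hq_fps q) * fps_dilate q (eq_fps q x))"
    using fps_qeuler_eq_fps[OF assms, of "q * x"]
    by (simp add: fps_qeuler_Hq_fps[OF assms] eq_fps_scaled_arg algebra_simps)
  also have "\<dots> = (fps_const (q * x) * fps_X - fps_X ^ 2) * fps_dilate q (Hq_fps q * eq_fps q x)"
    by (simp add: fps_compose_mult_distrib)
  finally show ?thesis .
qed

lemma qHermite_gf_nth_recurrence:
  assumes "\<bar>q\<bar> < 1"
  shows "qint q (m + 2) * (Hq_fps q * eq_fps q (q * x)) $ (m + 2)
    = x * q ^ (m + 2) * (Hq_fps q * eq_fps q x) $ (m + 1) - q ^ m * (Hq_fps q * eq_fps q x) $ m"
proof -
  have "qint q (m + 2) * (Hq_fps q * eq_fps q (q * x)) $ (m + 2)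
      = ((fps_const (q * x) * fps_X - fps_X ^ 2) * fps_dilate q (Hq_fps q * eq_fps q x)) $ (m + 2)"
    by (simp only: fps_qeuler_qHermite_gf[OF assms, symmetric] fps_qeuler_def fps_nth_Abs_fps)
  also have "\<dots> = x * q ^ (m + 2) * (Hq_fps q * eq_fps q x) $ (m + 1) - q ^ m * (Hq_fps q * eq_fps q x) $ m"
    by (simp add: left_diff_distrib mult.assoc fps_X_power_mult_nth)
  finally show ?thesis .
qed

theorem theorem10:
  fixes q x :: real and n :: nat
  assumes "0 < q" and "q < 1" and "n \<ge> 2"
  shows "qHermite q n (q * x)
    = x * q ^ n * qHermite q (n - 1) x - qint q (n - 1) * q ^ (n - 2) * qHermite q (n - 2) x"
proof -
  obtain m where n: "n = m + 2"
    using assms(3) by (metis add.commute le_Suc_ex)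
  have "\<bar>q\<bar> < 1"
    using assms(1,2) by simp
  have "qHermite q (m + 2) (q * x)
      = qfact q (m + 1) * (qint q (m + 2) * (Hq_fps q * eq_fps q (q * x)) $ (m + 2))"
    unfolding qHermite_def by (simp add: qfact_Suc)
  also have "\<dots> = qfact q (m + 1) * (x * q ^ (m + 2) * (Hq_fps q * eq_fps q x) $ (m + 1)
      - q ^ m * (Hq_fps q * eq_fps q x) $ m)"
    using \<open>\<bar>q\<bar> < 1\<close> by (simp only: qHermite_gf_nth_recurrence)
  finally show ?thesis
    by (simp add: n qHermite_def qfact_Suc algebra_simps)
qed

end
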